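(* Let $A\in\mathbb{R}^{n\times n}$, let $s$ be an integer with $1\leq s<d(A)$, and let $v_0\in\mathbb{R}^n$ with $\|v_0\|=1$ and $d(A,v_0)\geq s+1$. Let $\Sigma_*^A$ be the set of limit vectors (accumulation points) of the sequence $\{v_k\}$ of the Arnoldi cross iteration ACI($s$) started at $v_0$. Then: (1) $\Sigma_*^A$ is a closed and connected subset of $\mathbb{R}^n$; (2) $\Sigma_*^A\subseteq\Sigma^A$, and every $v_*\in\Sigma_*^A$ satisfies $v_*=T_{A^T}(T_A(v_* ))$.
   Context: Notation: for $A\in\mathbb{R}^{n\times n}$, $d(A)$ is the degree of the minimal polynomial of $A$, $d(A,v)$ is the grade of $v$ w.r.t. $A$ (degree of the monic polynomial $p$ of smallest degree with $p(A)v=0$), $\mathcal{K}_k(A,v)=\mathrm{span}\{v,Av,\dots,A^{k-1}v\}$, $\mathcal{M}_s$ is the set of real monic polynomials of degree $s$, and $\|\cdot\|$ is the Euclidean norm. For a matrix $B$ and a vector $u$ with $d(B,u)\geq s$, let $P_s(\cdot\,;u)\in\mathcal{M}_s$ (determined w.r.t. $B$) be the unique monic polynomial with $P_s(B;u)u\perp\mathcal{K}_s(B,u)$. The Arnoldi cross iteration ACI($s$) started at $v_0$ is: for $k=0,1,2,\dots$: $\widetilde w_k=P_s(A;v_k)v_k$, $w_k=\widetilde w_k/\|\widetilde w_k\|$, $\widetilde v_{k+1}=P_s(A^T;w_k)w_k$, $v_{k+1}=\widetilde v_{k+1}/\|\widetilde v_{k+1}\|$. Define $\Sigma^A:=\{v\in\mathbb{R}^n:\|v\|=1,\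 d(A,v)\geq s+1\}$ and, for unit $v$ with $d(A,v)\geq s+1$, $T_A(v):=P_s(A;v)v/\|P_s(A;v)v\|$; $T_{A^T}$ is defined analogously with $A^T$ in place of $A$. Thus $v_{k+1}=T_{A^T}(T_A(v_k))$. *)

theory Defs
  imports "HOL-Analysis.Analysis" "HOL-Computational_Algebra.Polynomial"
begin

definition krylov_vec :: "real^'n^'n \<Rightarrow> nat \<Rightarrow> real^'n \<Rightarrow> real^'n" where
  "krylov_vec A i v = ((\<lambda>x. A *v x) ^^ i) v"

definition poly_mat_vec :: "real poly \<Rightarrow> real^'n^'n \<Rightarrow> real^'n \<Rightarrow> real^'n" where
  "poly_mat_vec p A v = (\<Sum>i\<le>degree p. coeff p i *\<^sub>R krylov_vec A i v)"

definition monic_polys :: "nat \<Rightarrow> real poly set" where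
  "monic_polys s = {p. degree p = s \<and> lead_coeff p = 1}"

definition min_poly_degree :: "real^'n^'n \<Rightarrow> nat" where
  "min_poly_degree A = (LEAST k. \<exists>p\<in>monic_polys k. \<forall>v. poly_mat_vec p A v = 0)"

definition grade :: "real^'n^'n \<Rightarrow> real^'n \<Rightarrow> nat" where
  "grade A v = (LEAST k. \<exists>p\<in>monic_polys k. poly_mat_vec p A v = 0)"

definition krylov_space :: "nat \<Rightarrow> real^'n^'n \<Rightarrow> real^'n \<Rightarrow> (real^'n) set" where
  "krylov_space k A v = span {krylov_vec A i v | i. i < k}"

definition P_poly :: "nat \<Rightarrow> real^'n^'n \<Rightarrow> real^'n \<Rightarrow> real poly" where
  "P_poly s B u = (THE p. p \<in> monic_polys s \<and>
      (\<forall>x\<in>krylov_space s B u. inner (poly_mat_vec p B u) x = 0))"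

definition T_map :: "nat \<Rightarrow> real^'n^'n \<Rightarrow> real^'n \<Rightarrow> real^'n" where
  "T_map s A v = (let w = poly_mat_vec (P_poly s A v) A v in w /\<^sub>R norm w)"

definition Sigma_set :: "nat \<Rightarrow> real^'n^'n \<Rightarrow> (real^'n) set" where
  "Sigma_set s A = {v. norm v = 1 \<and> grade A v \<ge> s + 1}"

primrec aci_seq :: "nat \<Rightarrow> real^'n^'n \<Rightarrow> real^'n \<Rightarrow> nat \<Rightarrow> real^'n" where
  "aci_seq s A v0 0 = v0"
| "aci_seq s A v0 (Suc k) = T_map s (transpose A) (T_map s A (aci_seq s A v0 k))"

definition limit_vectors :: "(nat \<Rightarrow> 'a::topological_space) \<Rightarrow> 'a set" where
  "limit_vectors x = {y. \<exists>r. strict_mono r \<and> (x \<circ> r) \<longlonglongrightarrow> y}"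

end

theory Submission
  imports Defs
begin

text \<open>For \<open>u\<close> of grade \<open>> s\<close> the vector \<open>P\<^sub>s(B;u)u\<close> is the residual of \<open>B\<^sup>su\<close> orthogonal to
  \<open>K\<^sub>s(B,u)\<close>: the shortest vector \<open>p(B)u\<close> with \<open>p\<close> monic of degree \<open>s\<close>, and (by Gram--Schmidt)
  continuous in \<open>u\<close>. Pairing with the transpose, \<open>\<langle>p(B\<^sup>T)w, u\<rangle> = \<langle>w, p(B)u\<rangle>\<close>, shows that the residual
  norms \<open>\<mu>\<^sub>k = \<parallel>P\<^sub>s(A;v\<^sub>k)v\<^sub>k\<parallel>\<close> and \<open>\<nu>\<^sub>k = \<parallel>P\<^sub>s(A\<^sup>T;w\<^sub>k)w\<^sub>k\<parallel>\<close> interlace,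
  \<open>\<mu>\<^sub>k \<le> \<nu>\<^sub>k \<le> \<mu>\<^bsub>k+1\<^esub>\<close>, so being bounded they converge. As \<open>\<langle>v\<^bsub>k+1\<^esub>, v\<^sub>k\<rangle> = \<mu>\<^sub>k / \<nu>\<^sub>k\<close>, the
  steps \<open>\<parallel>v\<^bsub>k+1\<^esub> - v\<^sub>k\<parallel>\<close> tend to zero, and the limit set of a sequence on the unit sphere with
  vanishing steps is closed and connected. Finally \<open>\<mu>\<^sub>k \<ge> \<mu>\<^sub>0 > 0\<close> keeps the limit vectors away
  from the vectors of grade \<open>\<le> s\<close>, where \<open>T\<^bsub>A\<^sup>T\<^esub> \<circ> T\<^sub>A\<close> is continuous, so each limit vector is
  one of its fixed points.\<close>

section \<open>Limit sets of sequences\<close>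

lemma limit_vector_frequently_in:
  assumes "y \<in> limit_vectors x" and "open U" and "y \<in> U"
  shows "\<exists>\<^sub>F k in sequentially. x k \<in> U"
proof -
  obtain r where r: "strict_mono r" "(x \<circ> r) \<longlonglongrightarrow> y"
    using assms(1) unfolding limit_vectors_def by blast
  obtain n0 where n0: "\<forall>n\<ge>n0. x (r n) \<in> U"
    using topological_tendstoD[OF r(2) assms(2,3)] by (auto simp: eventually_sequentially)
  show ?thesis
    unfolding frequently_sequentially
  proof
    fix N
    have "N \<le> r (max n0 N)"
      using seq_suble[OF r(1), of "max n0 N"] by simp
    moreover have "x (r (max n0 N)) \<in> U"
      using n0 by simp
    ultimately show "\<exists>k\<ge>N. x k \<in> U"
      by blast
  qed
qed

lemma limit_vectors_iff:
  fixes x :: "nat \<Rightarrow> 'a::metric_space"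
  shows "y \<in> limit_vectors x \<longleftrightarrow> (\<forall>e>0. \<exists>\<^sub>F k in sequentially. dist (x k) y < e)"
proof
  assume y: "y \<in> limit_vectors x"
  show "\<forall>e>0. \<exists>\<^sub>F k in sequentially. dist (x k) y < e"
  proof (intro allI impI)
    fix e :: real
    assume "e > 0"
    then have "\<exists>\<^sub>F k in sequentially. x k \<in> ball y e"
      by (intro limit_vector_frequently_in[OF y]) auto
    then show "\<exists>\<^sub>F k in sequentially. dist (x k) y < e"
      by (simp add: dist_commute)
  qed
next
  assume close: "\<forall>e>0. \<exists>\<^sub>F k in sequentially. dist (x k) y < e"
  let ?P = "\<lambda>n k. dist (x k) y < inverse (real (Suc n))"
  have step: "\<exists>k'. ?P (Suc n) k' \<and> k < k'" for n k
  proof -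
    have "inverse (real (Suc (Suc n))) > 0"
      by simp
    then have "\<exists>\<^sub>F k' in sequentially. ?P (Suc n) k'"
      using close by blast
    then obtain k' where "Suc k \<le> k'" "?P (Suc n) k'"
      unfolding frequently_sequentially by blast
    then show ?thesis by auto
  qed
  have "\<exists>k. ?P 0 k"
    using frequently_ex[OF close[rule_format, of 1]] by simp
  then have "\<exists>r. \<forall>n. ?P n (r n) \<and> r n < r (Suc n)"
    using step by (rule dependent_nat_choice)
  then obtain r where r: "\<And>n. ?P n (r n)" "\<And>n. r n < r (Suc n)"
    by blast
  have bound: "\<forall>n. dist (x (r n)) y \<le> inverse (real (Suc n))"
    using r(1) less_imp_le by blast
  have "(\<lambda>n. dist (x (r n)) y) \<longlonglongrightarrow> 0"
  proof (rule tendsto_sandwich[OF _ _ tendsto_const LIMSEQ_inverse_real_of_nat])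
    show "\<forall>\<^sub>F n in sequentially. 0 \<le> dist (x (r n)) y"
      by (rule always_eventually) simp
    show "\<forall>\<^sub>F n in sequentially. dist (x (r n)) y \<le> inverse (real (Suc n))"
      using bound by (rule always_eventually)
  qed
  then have "(x \<circ> r) \<longlonglongrightarrow> y"
    unfolding o_def by (rule tendsto_dist_iff[THEN iffD2])
  then show "y \<in> limit_vectors x"
    unfolding limit_vectors_def using r(2) strict_mono_Suc_iff by blast
qed

lemma closed_limit_vectors:
  fixes x :: "nat \<Rightarrow> 'a::metric_space"
  shows "closed (limit_vectors x)"
  unfolding closed_def open_dist
proof (intro ballI)
  fix y
  assume "y \<in> - limit_vectors x"
  then obtain e where "e > 0" and far: "\<forall>\<^sub>F k in sequentially. dist (x k) y \<ge> e"
    by (auto simp: limit_vectors_iff not_frequently not_less)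
  have "z \<in> - limit_vectors x" if "dist z y < e / 2" for z
  proof
    assume "z \<in> limit_vectors x"
    then have "\<exists>\<^sub>F k in sequentially. dist (x k) z < e / 2"
      using half_gt_zero[OF \<open>e > 0\<close>] unfolding limit_vectors_iff by blast
    then have "\<exists>\<^sub>F k in sequentially. dist (x k) z < e / 2 \<and> e \<le> dist (x k) y"
      using far by (rule frequently_eventually_frequently)
    then obtain k where "dist (x k) z < e / 2" "e \<le> dist (x k) y"
      by (auto dest: frequently_ex)
    then show False
      using that dist_triangle[of "x k" y z] by (simp add: dist_commute)
  qed
  then show "\<exists>e>0. \<forall>z. dist z y < e \<longrightarrow> z \<in> - limit_vectors x"
    using \<open>e > 0\<close> by (intro exI[of _ "e / 2"]) auto
qed

lemma limit_vectors_subset: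
  assumes "closed S" and "\<And>k. x k \<in> S"
  shows "limit_vectors x \<subseteq> S"
proof
  fix y
  assume "y \<in> limit_vectors x"
  then obtain r where lim: "(x \<circ> r) \<longlonglongrightarrow> y"
    unfolding limit_vectors_def by blast
  show "y \<in> S"
    using closed_sequentially[OF assms(1) _ lim] assms(2) by simp
qed

lemma limit_vector_in_closed:
  fixes x :: "nat \<Rightarrow> 'a::metric_space"
  assumes "compact K" and "\<And>k. x k \<in> K" and "closed F" and "\<exists>\<^sub>F k in sequentially. x k \<in> F"
  obtains l where "l \<in> limit_vectors x" and "l \<in> F"
proof -
  have "\<exists>r::nat \<Rightarrow> nat. strict_mono r \<and> (\<forall>n. \<not> x (r n) \<notin> F)"
    using assms(4) unfolding frequently_def by (rule not_eventually_sequentiallyD)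
  then obtain r :: "nat \<Rightarrow> nat" where r: "strict_mono r" "\<And>n. x (r n) \<in> F"
    by auto
  have "\<forall>n. (x \<circ> r) n \<in> K"
    using assms(2) by simp
  then obtain l r' where "l \<in> K" "strict_mono r'" and lim: "((x \<circ> r) \<circ> r') \<longlonglongrightarrow> l"
    by (rule seq_compactE[OF compact_imp_seq_compact[OF assms(1)]])
  have "strict_mono (r \<circ> r')"
    using r(1) \<open>strict_mono r'\<close> by (rule strict_mono_o)
  moreover have "(x \<circ> (r \<circ> r')) \<longlonglongrightarrow> l"
    using lim by (simp only: o_assoc)
  ultimately have "l \<in> limit_vectors x"
    unfolding limit_vectors_def by blast
  moreover have "l \<in> F"
    using closed_sequentially[OF assms(3) _ lim] r(2) by (simp only: comp_apply simp_thms)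
  ultimately show thesis
    by (rule that)
qed

lemma frequently_between:
  fixes g :: "nat \<Rightarrow> real"
  assumes "\<forall>\<^sub>F k in sequentially. \<bar>g (Suc k) - g k\<bar> < b - a"
    and "\<exists>\<^sub>F k in sequentially. g k < a" and "\<exists>\<^sub>F k in sequentially. g k > b"
  shows "\<exists>\<^sub>F k in sequentially. a \<le> g k \<and> g k \<le> b"
  unfolding frequently_sequentially
proof (rule allI, rule ccontr)
  fix N
  assume outside: "\<not> (\<exists>k\<ge>N. a \<le> g k \<and> g k \<le> b)"
  obtain M where steps: "\<And>k. k \<ge> M \<Longrightarrow> \<bar>g (Suc k) - g k\<bar> < b - a"
    using assms(1) unfolding eventually_sequentially by blast
  obtain k where k: "k \<ge> max N M" "g k < a"
    using assms(2) unfolding frequently_sequentially by blast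
  have below: "g j < a" if "k \<le> j" for j
    using that
  proof (induction rule: dec_induct)
    case base
    show ?case using k by simp
  next
    case (step j)
    then have "g (Suc j) < b"
      using steps[of j] k by simp
    moreover have "\<not> (a \<le> g (Suc j) \<and> g (Suc j) \<le> b)"
      using outside step k by simp
    ultimately show ?case by linarith
  qed
  have "\<bar>g (Suc k) - g k\<bar> < b - a"
    using steps k by simp
  then have "a < b" by linarith
  obtain m where "k \<le> m" "b < g m"
    using assms(3) unfolding frequently_sequentially by blast
  then show False
    using below[of m] \<open>a < b\<close> by linarith
qed

lemma separating_lipschitz_function:
  fixes C1 C2 :: "'a::metric_space set"
  assumes "compact C1" and "closed C2" and "C1 \<noteq> {}" and "C2 \<noteq> {}" and "C1 \<inter> C2 = {}"
  obtains f :: "'a \<Rightarrow> real" and \<delta> where "continuous_on UNIV f" and "\<delta> > 0"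
    and "\<And>a b. \<bar>f a - f b\<bar> \<le> 2 * dist a b"
    and "\<And>z. z \<in> C1 \<Longrightarrow> f z \<le> - \<delta>" and "\<And>z. z \<in> C2 \<Longrightarrow> \<delta> \<le> f z"
proof
  define f where "f z = infdist z C1 - infdist z C2" for z
  show "continuous_on UNIV f"
    unfolding f_def by (intro continuous_intros)
  show "setdist C1 C2 > 0"
    using setdist_gt_0_compact_closed[OF assms(1,2)] assms(3-5) by simp
  show "\<bar>f a - f b\<bar> \<le> 2 * dist a b" for a b
    using infdist_triangle_abs[of a C1 b] infdist_triangle_abs[of a C2 b] unfolding f_def
    by linarith
  show "f z \<le> - setdist C1 C2" if "z \<in> C1" for z
  proof -
    have "setdist C1 C2 \<le> setdist {z} C2"
      using that by (intro setdist_subset_left) auto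
    then show ?thesis
      using infdist_zero[OF that] by (simp add: f_def infdist_eq_setdist)
  qed
  show "setdist C1 C2 \<le> f z" if "z \<in> C2" for z
  proof -
    have "setdist C2 C1 \<le> setdist {z} C1"
      using that by (intro setdist_subset_left) auto
    then show ?thesis
      using infdist_zero[OF that] by (simp add: f_def infdist_eq_setdist setdist_sym)
  qed
qed

text \<open>Ostrowski's argument: a sequence in a compact set with vanishing steps cannot jump from near
  one of two separated pieces of its limit set to near the other without visiting the gap
  infinitely often, which would produce a limit vector in the gap.\<close>
lemma connected_limit_vectors:
  fixes x :: "nat \<Rightarrow> 'a::metric_space"
  assumes "compact K" and "\<And>k. x k \<in> K"
    and steps: "(\<lambda>k. dist (x (Suc k)) (x k)) \<longlonglongrightarrow> 0"
  shows "connected (limit_vectors x)"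
proof (subst connected_closed_set[OF closed_limit_vectors], intro notI, elim exE conjE)
  fix C1 C2
  assume closed: "closed C1" "closed C2" and nonempty: "C1 \<noteq> {}" "C2 \<noteq> {}"
    and cover: "C1 \<union> C2 = limit_vectors x" and disjoint: "C1 \<inter> C2 = {}"
  have "limit_vectors x \<subseteq> K"
    by (rule limit_vectors_subset[OF compact_imp_closed[OF assms(1)] assms(2)])
  then have "K \<inter> C1 = C1"
    using cover by blast
  then have "compact C1"
    using compact_Int_closed[OF assms(1) closed(1)] by simp
  obtain f :: "'a \<Rightarrow> real" and \<delta> where cont: "continuous_on UNIV f" and "\<delta> > 0"
    and lipschitz: "\<And>a b. \<bar>f a - f b\<bar> \<le> 2 * dist a b"
    and f_C1: "\<And>z. z \<in> C1 \<Longrightarrow> f z \<le> - \<delta>" and f_C2: "\<And>z. z \<in> C2 \<Longrightarrow> \<delta> \<le> f z"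
    using separating_lipschitz_function[OF \<open>compact C1\<close> closed(2) nonempty disjoint] by blast
  obtain y1 y2 where "y1 \<in> C1" "y2 \<in> C2"
    using nonempty by blast
  then have "y1 \<in> limit_vectors x" "y2 \<in> limit_vectors x"
    using cover by blast+
  have "f y1 < - \<delta> / 2" "\<delta> / 2 < f y2"
    using f_C1[OF \<open>y1 \<in> C1\<close>] f_C2[OF \<open>y2 \<in> C2\<close>] \<open>\<delta> > 0\<close> by linarith+
  have "open {z. f z < - \<delta> / 2}" and "open {z. \<delta> / 2 < f z}"
    by (intro open_Collect_less cont continuous_on_const)+
  then have "\<exists>\<^sub>F k in sequentially. x k \<in> {z. f z < - \<delta> / 2}"
    and "\<exists>\<^sub>F k in sequentially. x k \<in> {z. \<delta> / 2 < f z}"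
    using limit_vector_frequently_in \<open>y1 \<in> limit_vectors x\<close> \<open>y2 \<in> limit_vectors x\<close>
      \<open>f y1 < - \<delta> / 2\<close> \<open>\<delta> / 2 < f y2\<close> mem_Collect_eq
    by metis+
  then have low: "\<exists>\<^sub>F k in sequentially. f (x k) < - \<delta> / 2"
    and high: "\<exists>\<^sub>F k in sequentially. \<delta> / 2 < f (x k)"
    by simp_all
  have "\<forall>\<^sub>F k in sequentially. dist (x (Suc k)) (x k) < \<delta> / 2"
    using order_tendstoD(2)[OF steps half_gt_zero[OF \<open>\<delta> > 0\<close>]] by simp
  then have "\<forall>\<^sub>F k in sequentially. \<bar>f (x (Suc k)) - f (x k)\<bar> < \<delta> / 2 - - \<delta> / 2"
  proof eventually_elim
    case (elim k)
    then show ?case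
      using lipschitz[of "x (Suc k)" "x k"] by linarith
  qed
  then have "\<exists>\<^sub>F k in sequentially. - \<delta> / 2 \<le> f (x k) \<and> f (x k) \<le> \<delta> / 2"
    using low high by (rule frequently_between)
  then have visits: "\<exists>\<^sub>F k in sequentially. x k \<in> {z. \<bar>f z\<bar> \<le> \<delta> / 2}"
    by (rule frequently_elim1) auto
  have "closed {z. \<bar>f z\<bar> \<le> \<delta> / 2}"
    by (intro closed_Collect_le continuous_intros cont)
  then obtain l where "l \<in> limit_vectors x" and "l \<in> {z. \<bar>f z\<bar> \<le> \<delta> / 2}"
    using visits by (rule limit_vector_in_closed[OF assms(1,2)])
  moreover have "l \<in> C1 \<or> l \<in> C2"
    using \<open>l \<in> limit_vectors x\<close> cover by blast
  ultimately show False
    using f_C1[of l] f_C2[of l] \<open>\<delta> > 0\<close> by auto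
qed

lemma limit_vector_fixed_point:
  fixes x :: "nat \<Rightarrow> 'a::metric_space"
  assumes "isCont f y" and step: "\<And>k. x (Suc k) = f (x k)"
    and steps: "(\<lambda>k. dist (x (Suc k)) (x k)) \<longlonglongrightarrow> 0" and "y \<in> limit_vectors x"
  shows "f y = y"
proof -
  obtain r where r: "strict_mono r" "(x \<circ> r) \<longlonglongrightarrow> y"
    using assms(4) unfolding limit_vectors_def by blast
  have "(\<lambda>n. f (x (r n))) \<longlonglongrightarrow> f y"
    using isCont_tendsto_compose[OF assms(1) r(2)] by (simp add: o_def)
  moreover have "(\<lambda>n. f (x (r n))) \<longlonglongrightarrow> y"
  proof (rule tendsto_dist_iff[THEN iffD2])
    have "(\<lambda>n. dist (x (Suc (r n))) (x (r n))) \<longlonglongrightarrow> 0"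
      using LIMSEQ_subseq_LIMSEQ[OF steps r(1)] by (simp add: o_def)
    moreover have "(\<lambda>n. dist (x (r n)) y) \<longlonglongrightarrow> 0"
      using tendsto_dist_iff[THEN iffD1, OF r(2)] by (simp add: o_def)
    ultimately have "(\<lambda>n. dist (x (Suc (r n))) (x (r n)) + dist (x (r n)) y) \<longlonglongrightarrow> 0 + 0"
      by (rule tendsto_add)
    then have lim: "(\<lambda>n. dist (x (Suc (r n))) (x (r n)) + dist (x (r n)) y) \<longlonglongrightarrow> 0"
      by simp
    have "\<forall>n. dist (f (x (r n))) y \<le> dist (x (Suc (r n))) (x (r n)) + dist (x (r n)) y"
      by (simp add: step dist_triangle)
    then show "(\<lambda>n. dist (f (x (r n))) y) \<longlonglongrightarrow> 0"
      by (rule tendsto_sandwich[OF always_eventually always_eventually tendsto_const lim, rotated]) simp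
  qed
  ultimately show ?thesis
    by (rule LIMSEQ_unique)
qed

section \<open>Krylov vectors and Gram--Schmidt residuals\<close>

lemma krylov_vec_0 [simp]: "krylov_vec B 0 v = v"
  by (simp add: krylov_vec_def)

lemma krylov_vec_Suc: "krylov_vec B (Suc i) v = B *v krylov_vec B i v"
  by (simp add: krylov_vec_def)

lemma krylov_vec_Suc_right: "krylov_vec B (Suc i) v = krylov_vec B i (B *v v)"
  by (simp add: krylov_vec_def funpow_Suc_right del: funpow.simps)

lemma linear_krylov_vec: "linear (krylov_vec B i)"
proof (induction i)
  case 0
  show ?case by (simp add: linear_id[unfolded id_def])
next
  case (Suc i)
  have "krylov_vec B (Suc i) = (\<lambda>x. B *v x) \<circ> krylov_vec B i"
    by (rule ext) (simp add: krylov_vec_Suc)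
  then show ?case
    using linear_compose[OF Suc matrix_vector_mul_linear[of B]] by (simp add: o_def)
qed

lemma isCont_krylov_vec: "isCont (krylov_vec B i) v"
  using linear_krylov_vec[of B i] by (simp add: linear_continuous_at linear_conv_bounded_linear)

lemma inner_transpose_krylov_vec:
  "inner (krylov_vec (transpose B) j w) u = inner w (krylov_vec B j u)"
proof (induction j arbitrary: u)
  case 0
  show ?case by simp
next
  case (Suc j)
  have "inner (krylov_vec (transpose B) (Suc j) w) u = inner (krylov_vec (transpose B) j w) (B *v u)"
    by (simp add: krylov_vec_Suc dot_lmul_matrix)
  also have "\<dots> = inner w (krylov_vec B (Suc j) u)"
    by (simp add: Suc krylov_vec_Suc_right)
  finally show ?case .
qed

lemma sum_atMost_split_last:
  fixes f :: "nat \<Rightarrow> 'a::comm_monoid_add"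
  shows "(\<Sum>j\<le>s. f j) = f s + (\<Sum>j<s. f j)"
proof -
  have "{..s} = insert s {..<s}" by auto
  then show ?thesis by simp
qed

lemma krylov_space_iff:
  "y \<in> krylov_space k B v \<longleftrightarrow> (\<exists>c. y = (\<Sum>j<k. c j *\<^sub>R krylov_vec B j v))"
proof
  assume "y \<in> krylov_space k B v"
  then show "\<exists>c. y = (\<Sum>j<k. c j *\<^sub>R krylov_vec B j v)"
    unfolding krylov_space_def
  proof (induction rule: span_induct_alt)
    case base
    show ?case by (rule exI[of _ "\<lambda>_. 0"]) simp
  next
    case (step a x y)
    then obtain i d where "i < k" "x = krylov_vec B i v" "y = (\<Sum>j<k. d j *\<^sub>R krylov_vec B j v)"
      by blast
    moreover have "(\<Sum>j<k. (if j = i then a else 0) *\<^sub>R krylov_vec B j v) = a *\<^sub>R x"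
      using \<open>i < k\<close> \<open>x = krylov_vec B i v\<close> by (simp add: if_distrib[of "\<lambda>c. c *\<^sub>R _"] cong: if_cong)
    ultimately have "a *\<^sub>R x + y = (\<Sum>j<k. (d j + (if j = i then a else 0)) *\<^sub>R krylov_vec B j v)"
      by (simp add: scaleR_add_left sum.distrib add.commute)
    then show ?case by (rule exI[where x = "\<lambda>j. d j + (if j = i then a else 0)"])
  qed
next
  assume "\<exists>c. y = (\<Sum>j<k. c j *\<^sub>R krylov_vec B j v)"
  then obtain c where "y = (\<Sum>j<k. c j *\<^sub>R krylov_vec B j v)" by blast
  then show "y \<in> krylov_space k B v"
    unfolding krylov_space_def by (simp only:) (intro span_sum span_scale span_base, blast)
qed

lemma subspace_krylov_space: "subspace (krylov_space k B v)"
  unfolding krylov_space_def by (rule subspace_span)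

lemma krylov_space_mono: "i \<le> j \<Longrightarrow> krylov_space i B v \<subseteq> krylov_space j B v"
  unfolding krylov_space_def by (rule span_mono) auto

lemma krylov_vec_in_krylov_space: "j < i \<Longrightarrow> krylov_vec B j v \<in> krylov_space i B v"
  unfolding krylov_space_def by (rule span_base) auto

lemma krylov_space_Suc:
  "krylov_space (Suc i) B v = span (insert (krylov_vec B i v) {krylov_vec B j v |j. j < i})"
  unfolding krylov_space_def by (rule arg_cong[where f = span]) (auto simp: less_Suc_eq)

text \<open>The orthogonal projection onto \<open>K\<^sub>i(B,v)\<close>, built by Gram--Schmidt so that it is visibly
  continuous in \<open>v\<close> wherever the residuals below \<open>i\<close> are nonzero. A vanishing residual \<open>r\<close>
  contributes nothing, since \<open>x \<bullet> r / (r \<bullet> r) = 0\<close> then.\<close>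
primrec krylov_proj :: "real^'n^'n \<Rightarrow> nat \<Rightarrow> real^'n \<Rightarrow> real^'n \<Rightarrow> real^'n" where
  "krylov_proj B 0 v x = 0"
| "krylov_proj B (Suc i) v x =
    (let r = krylov_vec B i v - krylov_proj B i v (krylov_vec B i v)
     in krylov_proj B i v x + (inner x r / inner r r) *\<^sub>R r)"

definition krylov_residual :: "real^'n^'n \<Rightarrow> nat \<Rightarrow> real^'n \<Rightarrow> real^'n" where
  "krylov_residual B i v = krylov_vec B i v - krylov_proj B i v (krylov_vec B i v)"

lemma krylov_proj_Suc:
  "krylov_proj B (Suc i) v x = krylov_proj B i v x
     + (inner x (krylov_residual B i v) / inner (krylov_residual B i v) (krylov_residual B i v))
       *\<^sub>R krylov_residual B i v"
  by (simp add: krylov_residual_def Let_def)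

declare krylov_proj.simps(2) [simp del]

lemma krylov_proj_in_krylov_space: "krylov_proj B i v x \<in> krylov_space i B v"
proof (induction i arbitrary: x)
  case 0
  show ?case by (simp add: krylov_space_def span_zero)
next
  case (Suc i)
  have "krylov_residual B i v \<in> krylov_space (Suc i) B v"
    unfolding krylov_residual_def
    using Suc[of "krylov_vec B i v"] krylov_space_mono[of i "Suc i" B v]
      krylov_vec_in_krylov_space[of i "Suc i" B v]
    by (auto intro: subspace_diff[OF subspace_krylov_space])
  then show ?case
    unfolding krylov_proj_Suc using Suc[of x] krylov_space_mono[of i "Suc i" B v]
    by (auto intro!: subspace_add[OF subspace_krylov_space] subspace_scale[OF subspace_krylov_space])
qed

lemma krylov_residual_in_krylov_space: "krylov_residual B i v \<in> krylov_space (Suc i) B v"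
  unfolding krylov_residual_def
  using krylov_proj_in_krylov_space[of B i v "krylov_vec B i v"] krylov_space_mono[of i "Suc i" B v]
    krylov_vec_in_krylov_space[of i "Suc i" B v]
  by (auto intro: subspace_diff[OF subspace_krylov_space])

lemma krylov_proj_orthogonal:
  "y \<in> krylov_space i B v \<Longrightarrow> inner (x - krylov_proj B i v x) y = 0"
proof (induction i arbitrary: x y)
  case 0
  then show ?case by (simp add: krylov_space_def)
next
  case (Suc i)
  define r where "r = krylov_residual B i v"
  define c where "c = inner x r / inner r r"
  have r_orth: "inner r z = 0" if "z \<in> krylov_space i B v" for z
    using Suc.IH[OF that, of "krylov_vec B i v"] by (simp add: r_def krylov_residual_def)
  have proj_in: "krylov_proj B i v z \<in> krylov_space i B v" for z
    by (rule krylov_proj_in_krylov_space)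
  have diff: "x - krylov_proj B (Suc i) v x = (x - krylov_proj B i v x) - c *\<^sub>R r"
    by (simp add: krylov_proj_Suc r_def c_def algebra_simps)
  have "inner (x - krylov_proj B (Suc i) v x) z = 0"
    if "z \<in> insert (krylov_vec B i v) {krylov_vec B j v |j. j < i}" for z
  proof (cases "z = krylov_vec B i v")
    case True
    have z: "z = r + krylov_proj B i v (krylov_vec B i v)"
      by (simp add: True r_def krylov_residual_def)
    have "c * inner r r = inner x r"
      by (cases "r = 0") (simp_all add: c_def)
    moreover have "inner (krylov_proj B i v x) r = 0"
      using r_orth[OF proj_in[of x]] by (simp add: inner_commute)
    ultimately show ?thesis
      unfolding diff z
      using Suc.IH[OF proj_in] r_orth[OF proj_in]
      by (simp add: inner_add_right inner_diff_left algebra_simps)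
  next
    case False
    then have z: "z \<in> krylov_space i B v"
      using that by (auto intro: krylov_vec_in_krylov_space)
    show ?thesis
      unfolding diff using Suc.IH[OF z, of x] r_orth[OF z] by (simp add: inner_diff_left)
  qed
  then show ?case
    using orthogonal_to_span[of y _ "x - krylov_proj B (Suc i) v x"] Suc.prems
    unfolding krylov_space_Suc orthogonal_def by blast
qed

lemma krylov_residual_orthogonal:
  "y \<in> krylov_space i B v \<Longrightarrow> inner (krylov_residual B i v) y = 0"
  unfolding krylov_residual_def by (rule krylov_proj_orthogonal)

lemma isCont_krylov_proj:
  assumes "\<forall>j<i. krylov_residual B j v0 \<noteq> 0" and "isCont f v0"
  shows "isCont (\<lambda>v. krylov_proj B i v (f v)) v0"
  using assms
proof (induction i arbitrary: f)
  case 0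
  then show ?case by simp
next
  case (Suc i)
  have residual: "isCont (krylov_residual B i) v0"
    unfolding krylov_residual_def[abs_def]
    using Suc.IH[of "krylov_vec B i"] Suc.prems isCont_krylov_vec[where B = B and i = i]
    by (auto intro!: continuous_intros)
  have nonzero: "inner (krylov_residual B i v0) (krylov_residual B i v0) \<noteq> 0"
    using Suc.prems by simp
  have proj: "isCont (\<lambda>v. krylov_proj B i v (f v)) v0"
    using Suc by auto
  show ?case
    unfolding krylov_proj_Suc by (intro continuous_intros proj residual nonzero Suc.prems(2))
qed

lemma isCont_krylov_residual:
  assumes "\<forall>j<i. krylov_residual B j v0 \<noteq> 0"
  shows "isCont (krylov_residual B i) v0"
  unfolding krylov_residual_def[abs_def]
  using isCont_krylov_proj[OF assms isCont_krylov_vec] isCont_krylov_vec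
  by (intro continuous_intros)

section \<open>Monic annihilators, the grade and \<open>P\<^sub>s\<close>\<close>

definition has_monic_annihilator :: "real^'n^'n \<Rightarrow> nat \<Rightarrow> real^'n \<Rightarrow> bool" where
  "has_monic_annihilator B s u \<longleftrightarrow> (\<exists>c. c s = 1 \<and> (\<Sum>j\<le>s. c j *\<^sub>R krylov_vec B j u) = 0)"

lemma krylov_residual_monic_combination:
  obtains c where "c s = 1" and "krylov_residual B s u = (\<Sum>j\<le>s. c j *\<^sub>R krylov_vec B j u)"
proof -
  obtain d where d: "krylov_proj B s u (krylov_vec B s u) = (\<Sum>j<s. d j *\<^sub>R krylov_vec B j u)"
    using krylov_proj_in_krylov_space krylov_space_iff by blast
  define c where "c = (\<lambda>j. if j = s then 1 else - d j)"
  have "(\<Sum>j<s. c j *\<^sub>R krylov_vec B j u) = - (\<Sum>j<s. d j *\<^sub>R krylov_vec B j u)"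
    by (simp add: c_def sum_negf)
  then have "krylov_residual B s u = (\<Sum>j\<le>s. c j *\<^sub>R krylov_vec B j u)"
    by (simp add: sum_atMost_split_last krylov_residual_def d c_def)
  moreover have "c s = 1"
    by (simp add: c_def)
  ultimately show thesis
    using that by blast
qed

text \<open>Every monic combination differs from the residual by an element of the Krylov space,
  to which the residual is orthogonal.\<close>
lemma inner_krylov_residual_monic_combination:
  assumes "c s = 1"
  shows "inner (krylov_residual B s u) (\<Sum>j\<le>s. c j *\<^sub>R krylov_vec B j u)
       = inner (krylov_residual B s u) (krylov_residual B s u)"
proof -
  let ?k = "\<Sum>j<s. c j *\<^sub>R krylov_vec B j u"
  have "?k + krylov_proj B s u (krylov_vec B s u) \<in> krylov_space s B u"
    using krylov_proj_in_krylov_space krylov_space_iff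
    by (blast intro: subspace_add[OF subspace_krylov_space])
  then have "inner (krylov_residual B s u) (?k + krylov_proj B s u (krylov_vec B s u)) = 0"
    by (rule krylov_residual_orthogonal)
  moreover have "(\<Sum>j\<le>s. c j *\<^sub>R krylov_vec B j u)
      = krylov_residual B s u + (?k + krylov_proj B s u (krylov_vec B s u))"
    using assms by (simp add: sum_atMost_split_last krylov_residual_def)
  ultimately show ?thesis by (simp add: inner_add_right)
qed

lemma norm_krylov_residual_le:
  assumes "c s = 1"
  shows "norm (krylov_residual B s u) \<le> norm (\<Sum>j\<le>s. c j *\<^sub>R krylov_vec B j u)"
proof -
  let ?r = "krylov_residual B s u" and ?m = "\<Sum>j\<le>s. c j *\<^sub>R krylov_vec B j u"
  have "norm ?r * norm ?r = inner ?r ?m"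
    using inner_krylov_residual_monic_combination[of c s B u] assms by (simp add: norm_eq_sqrt_inner)
  also have "\<dots> \<le> norm ?r * norm ?m"
    by (rule norm_cauchy_schwarz)
  finally show ?thesis
    by (cases "norm ?r = 0") (auto simp: mult_le_cancel_left)
qed

lemma krylov_residual_eq_0_iff:
  "krylov_residual B s u = 0 \<longleftrightarrow> has_monic_annihilator B s u"
proof
  assume "krylov_residual B s u = 0"
  moreover obtain c where "c s = 1" and "krylov_residual B s u = (\<Sum>j\<le>s. c j *\<^sub>R krylov_vec B j u)"
    by (rule krylov_residual_monic_combination)
  ultimately show "has_monic_annihilator B s u"
    unfolding has_monic_annihilator_def by auto
next
  assume "has_monic_annihilator B s u"
  then obtain c where "c s = 1" "(\<Sum>j\<le>s. c j *\<^sub>R krylov_vec B j u) = 0"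
    unfolding has_monic_annihilator_def by blast
  then show "krylov_residual B s u = 0"
    using norm_krylov_residual_le[of c s B u] by simp
qed

lemma has_monic_annihilator_Suc:
  assumes "has_monic_annihilator B g u"
  shows "has_monic_annihilator B (Suc g) u"
proof -
  obtain c where c: "c g = 1" "(\<Sum>j\<le>g. c j *\<^sub>R krylov_vec B j u) = 0"
    using assms unfolding has_monic_annihilator_def by blast
  define c' where "c' = (\<lambda>i. case i of 0 \<Rightarrow> 0 | Suc j \<Rightarrow> c j)"
  have "(\<Sum>j\<le>g. c j *\<^sub>R krylov_vec B (Suc j) u) = B *v (\<Sum>j\<le>g. c j *\<^sub>R krylov_vec B j u)"
    by (simp add: linear_sum[OF matrix_vector_mul_linear] linear_scale[OF matrix_vector_mul_linear]
        krylov_vec_Suc)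
  then have "(\<Sum>i\<le>Suc g. c' i *\<^sub>R krylov_vec B i u) = 0"
    using c(2) unfolding sum.atMost_Suc_shift by (simp add: c'_def)
  moreover have "c' (Suc g) = 1"
    using c(1) by (simp add: c'_def)
  ultimately show ?thesis
    unfolding has_monic_annihilator_def by blast
qed

lemma has_monic_annihilator_mono:
  assumes "has_monic_annihilator B g u" and "g \<le> s"
  shows "has_monic_annihilator B s u"
  using assms(2,1) by (induction rule: dec_induct) (auto intro: has_monic_annihilator_Suc)

lemma exists_monic_annihilator: "\<exists>k. has_monic_annihilator B k (u :: real^'n)"
proof (rule ccontr)
  assume "\<nexists>k. has_monic_annihilator B k u"
  then have nonzero: "krylov_residual B k u \<noteq> 0" for k
    by (simp add: krylov_residual_eq_0_iff)
  have orth: "inner (krylov_residual B i u) (krylov_residual B j u) = 0" if "i \<noteq> j" for i j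
  proof -
    have "inner (krylov_residual B b u) (krylov_residual B a u) = 0" if "a < b" for a b
      using krylov_residual_in_krylov_space[of B a u] krylov_space_mono[of "Suc a" b B u] that
      by (auto intro: krylov_residual_orthogonal)
    then have "inner (krylov_residual B b u) (krylov_residual B a u) = 0 \<and>
        inner (krylov_residual B a u) (krylov_residual B b u) = 0" if "a < b" for a b
      using that by (simp add: inner_commute)
    with \<open>i \<noteq> j\<close> show ?thesis
      by (cases i j rule: linorder_cases) auto
  qed
  define R where "R = (\<lambda>k. krylov_residual B k u) ` {..CARD('n)}"
  have "inj_on (\<lambda>k. krylov_residual B k u) {..CARD('n)}"
    using orth nonzero by (intro inj_onI) (metis inner_eq_zero_iff)
  then have "card R = CARD('n) + 1"
    unfolding R_def by (simp add: card_image)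
  moreover have "pairwise orthogonal R"
    unfolding pairwise_def R_def orthogonal_def
  proof clarify
    fix i j
    assume "krylov_residual B i u \<noteq> krylov_residual B j u"
    then have "i \<noteq> j" by auto
    then show "inner (krylov_residual B i u) (krylov_residual B j u) = 0"
      by (rule orth)
  qed
  then have "independent R"
    using nonzero by (intro pairwise_orthogonal_independent) (auto simp: R_def)
  then have "card R \<le> CARD('n)"
    using independent_bound by fastforce
  ultimately show False by simp
qed

lemma poly_mat_vec_degree_le:
  "degree p \<le> n \<Longrightarrow> poly_mat_vec p B u = (\<Sum>i\<le>n. coeff p i *\<^sub>R krylov_vec B i u)"
  unfolding poly_mat_vec_def by (rule sum.mono_neutral_left) (auto simp: coeff_eq_0)

lemma monic_poly_of_coeffs:
  assumes "c s = 1"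
  obtains p where "p \<in> monic_polys s"
    and "\<And>B u. poly_mat_vec p B u = (\<Sum>j\<le>s. c j *\<^sub>R krylov_vec B j u)"
proof
  define p where "p = (\<Sum>j\<le>s. monom (c j) j)"
  have coeff_p: "coeff p i = (if i \<le> s then c i else 0)" for i
    by (simp add: p_def coeff_sum)
  then have "degree p = s"
    using assms by (intro antisym degree_le le_degree) auto
  then show "p \<in> monic_polys s"
    using assms coeff_p by (simp add: monic_polys_def)
  show "poly_mat_vec p B u = (\<Sum>j\<le>s. c j *\<^sub>R krylov_vec B j u)" for B u
    using \<open>degree p = s\<close> by (simp add: poly_mat_vec_def coeff_p)
qed

lemma has_monic_annihilator_of_poly:
  assumes "p \<noteq> 0" and "poly_mat_vec p B u = 0"
  shows "has_monic_annihilator B (degree p) u"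
proof -
  have "(\<Sum>j\<le>degree p. (coeff p j / lead_coeff p) *\<^sub>R krylov_vec B j u)
      = inverse (lead_coeff p) *\<^sub>R poly_mat_vec p B u"
    by (simp add: poly_mat_vec_def scaleR_sum_right divide_inverse mult.commute)
  then show ?thesis
    using assms unfolding has_monic_annihilator_def
    by (intro exI[of _ "\<lambda>j. coeff p j / lead_coeff p"]) simp
qed

lemma grade_ge_Suc_iff: "s + 1 \<le> grade B u \<longleftrightarrow> \<not> has_monic_annihilator B s u"
proof -
  have annihilator_poly: "(\<exists>p\<in>monic_polys k. poly_mat_vec p B u = 0) \<longleftrightarrow> has_monic_annihilator B k u"
    for k
  proof
    assume "\<exists>p\<in>monic_polys k. poly_mat_vec p B u = 0"
    then obtain p where "degree p = k" "lead_coeff p = 1" "poly_mat_vec p B u = 0"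
      by (auto simp: monic_polys_def)
    then show "has_monic_annihilator B k u"
      using has_monic_annihilator_of_poly[of p B u] by fastforce
  next
    assume "has_monic_annihilator B k u"
    then obtain c where "c k = 1" "(\<Sum>j\<le>k. c j *\<^sub>R krylov_vec B j u) = 0"
      unfolding has_monic_annihilator_def by blast
    then show "\<exists>p\<in>monic_polys k. poly_mat_vec p B u = 0"
      by (metis monic_poly_of_coeffs)
  qed
  have "has_monic_annihilator B (grade B u) u"
    unfolding grade_def annihilator_poly[symmetric]
    by (rule LeastI_ex) (use exists_monic_annihilator annihilator_poly in blast)
  moreover have "has_monic_annihilator B s u \<Longrightarrow> grade B u \<le> s"
    unfolding grade_def annihilator_poly[symmetric] by (rule Least_le)
  ultimately show ?thesis
    using has_monic_annihilator_mono[of B "grade B u" u s] by fastforce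
qed

lemma monic_poly_eqI:
  assumes "\<not> has_monic_annihilator B s u" and "p \<in> monic_polys s" and "q \<in> monic_polys s"
    and "poly_mat_vec p B u = poly_mat_vec q B u"
  shows "p = q"
proof (rule ccontr)
  assume "p \<noteq> q"
  then have nonzero: "p - q \<noteq> 0" by simp
  have degrees: "degree p = s" "degree q = s"
    using assms(2,3) by (auto simp: monic_polys_def)
  have degree_le: "degree (p - q) \<le> s"
    using degree_diff_le[of p s q] degrees by simp
  have "poly_mat_vec (p - q) B u = poly_mat_vec p B u - poly_mat_vec q B u"
    using degree_le degrees
    by (simp add: poly_mat_vec_degree_le[of _ s] scaleR_diff_left sum_subtractf)
  then have "poly_mat_vec (p - q) B u = 0"
    using assms(4) by simp
  then have "has_monic_annihilator B (degree (p - q)) u"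
    by (rule has_monic_annihilator_of_poly[OF nonzero])
  then show False
    using assms(1) has_monic_annihilator_mono[OF _ degree_le] by blast
qed

lemma poly_mat_vec_minus_krylov_residual:
  assumes "p \<in> monic_polys s"
  shows "poly_mat_vec p B u - krylov_residual B s u \<in> krylov_space s B u"
proof -
  have "degree p = s" and "coeff p s = 1"
    using assms by (auto simp: monic_polys_def)
  then have "poly_mat_vec p B u = krylov_vec B s u + (\<Sum>j<s. coeff p j *\<^sub>R krylov_vec B j u)"
    by (simp add: poly_mat_vec_def sum_atMost_split_last)
  then have "poly_mat_vec p B u - krylov_residual B s u
      = (\<Sum>j<s. coeff p j *\<^sub>R krylov_vec B j u) + krylov_proj B s u (krylov_vec B s u)"
    by (simp add: krylov_residual_def)
  then show ?thesis
    using krylov_space_iff krylov_proj_in_krylov_space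
    by (metis subspace_add[OF subspace_krylov_space])
qed

lemma poly_mat_vec_P_poly:
  assumes "\<not> has_monic_annihilator B s u"
  shows "poly_mat_vec (P_poly s B u) B u = krylov_residual B s u"
proof -
  let ?orth = "\<lambda>p. \<forall>x\<in>krylov_space s B u. inner (poly_mat_vec p B u) x = 0"
  obtain c where "c s = 1" and c: "krylov_residual B s u = (\<Sum>j\<le>s. c j *\<^sub>R krylov_vec B j u)"
    by (rule krylov_residual_monic_combination)
  then obtain p0 where p0: "p0 \<in> monic_polys s" "poly_mat_vec p0 B u = krylov_residual B s u"
    by (metis monic_poly_of_coeffs)
  have "p = p0" if "p \<in> monic_polys s" and "?orth p" for p
  proof -
    let ?d = "poly_mat_vec p B u - krylov_residual B s u"
    have "?d \<in> krylov_space s B u"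
      by (rule poly_mat_vec_minus_krylov_residual[OF that(1)])
    then have "inner ?d ?d = 0"
      using that(2) krylov_residual_orthogonal by (simp add: inner_diff_left)
    then have "poly_mat_vec p B u = poly_mat_vec p0 B u"
      using p0(2) by simp
    then show "p = p0"
      by (rule monic_poly_eqI[OF assms that(1) p0(1)])
  qed
  moreover have "?orth p0"
    by (simp add: p0(2) krylov_residual_orthogonal)
  ultimately have "P_poly s B u = p0"
    unfolding P_poly_def using p0(1) by (intro the_equality) blast+
  then show ?thesis
    using p0(2) by simp
qed

section \<open>The maps \<open>T\<close> and the transposed pairing\<close>

definition normalized_residual :: "real^'n^'n \<Rightarrow> nat \<Rightarrow> real^'n \<Rightarrow> real^'n" where
  "normalized_residual B s u = krylov_residual B s u /\<^sub>R norm (krylov_residual B s u)"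

lemma T_map_eq_normalized_residual:
  "\<not> has_monic_annihilator B s u \<Longrightarrow> T_map s B u = normalized_residual B s u"
  by (simp add: T_map_def Let_def normalized_residual_def poly_mat_vec_P_poly)

lemma norm_normalized_residual:
  "\<not> has_monic_annihilator B s u \<Longrightarrow> norm (normalized_residual B s u) = 1"
  by (simp add: normalized_residual_def krylov_residual_eq_0_iff)

lemma isCont_normalized_residual:
  assumes "\<not> has_monic_annihilator B s y"
  shows "isCont (normalized_residual B s) y"
proof -
  have "\<forall>j<s. krylov_residual B j y \<noteq> 0"
    using assms has_monic_annihilator_mono krylov_residual_eq_0_iff by (metis less_imp_le)
  then have "isCont (krylov_residual B s) y"
    by (rule isCont_krylov_residual)
  then show ?thesis
    unfolding normalized_residual_def[abs_def] using assms
    by (intro continuous_intros) (auto simp: krylov_residual_eq_0_iff)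
qed

lemma inner_krylov_residual_transpose:
  assumes "\<not> has_monic_annihilator B s u"
  shows "inner (krylov_residual (transpose B) s (normalized_residual B s u)) u
       = norm (krylov_residual B s u)"
proof -
  let ?r = "krylov_residual B s u" and ?w = "normalized_residual B s u"
  obtain c where "c s = 1"
    and c: "krylov_residual (transpose B) s ?w = (\<Sum>j\<le>s. c j *\<^sub>R krylov_vec (transpose B) j ?w)"
    by (rule krylov_residual_monic_combination)
  have "inner (krylov_residual (transpose B) s ?w) u = inner ?w (\<Sum>j\<le>s. c j *\<^sub>R krylov_vec B j u)"
    unfolding c by (simp add: inner_sum_left inner_sum_right inner_transpose_krylov_vec)
  also have "\<dots> = inner ?r ?r / norm ?r"
    using inner_krylov_residual_monic_combination[of c s B u] \<open>c s = 1\<close>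
    by (simp add: normalized_residual_def divide_inverse mult.commute)
  also have "\<dots> = norm ?r"
    using assms by (simp add: krylov_residual_eq_0_iff power2_norm_eq_inner[symmetric] power2_eq_square)
  finally show ?thesis .
qed

lemma not_has_monic_annihilator_transpose:
  assumes "\<not> has_monic_annihilator B s u"
  shows "\<not> has_monic_annihilator (transpose B) s (normalized_residual B s u)"
  using inner_krylov_residual_transpose[OF assms] assms
  by (auto simp: krylov_residual_eq_0_iff[symmetric])

lemma norm_krylov_residual_le_transpose:
  assumes "\<not> has_monic_annihilator B s u" and "norm u = 1"
  shows "norm (krylov_residual B s u)
       \<le> norm (krylov_residual (transpose B) s (normalized_residual B s u))"
  using inner_krylov_residual_transpose[OF assms(1)] assms(2)
    norm_cauchy_schwarz[of "krylov_residual (transpose B) s (normalized_residual B s u)" u]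
  by simp

lemma T_map_transpose_T_map:
  assumes "\<not> has_monic_annihilator B s u"
  shows "T_map s (transpose B) (T_map s B u)
       = normalized_residual (transpose B) s (normalized_residual B s u)"
  using T_map_eq_normalized_residual[OF assms]
    T_map_eq_normalized_residual[OF not_has_monic_annihilator_transpose[OF assms]]
  by simp

section \<open>The Arnoldi cross iteration\<close>

locale aci_run =
  fixes A :: "real^'n^'n" and s :: nat and v0 :: "real^'n"
  assumes norm_start: "norm v0 = 1"
    and nondegenerate_start: "\<not> has_monic_annihilator A s v0"
begin

abbreviation v :: "nat \<Rightarrow> real^'n" where
  "v \<equiv> aci_seq s A v0"

lemma aci_seq_invariant: "norm (v k) = 1 \<and> \<not> has_monic_annihilator A s (v k)"
proof (induction k)
  case 0
  show ?case using norm_start nondegenerate_start by simp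
next
  case (Suc k)
  then have nondegenerate: "\<not> has_monic_annihilator A s (v k)" by simp
  then have "\<not> has_monic_annihilator (transpose A) s (normalized_residual A s (v k))"
    by (rule not_has_monic_annihilator_transpose)
  then show ?case
    using not_has_monic_annihilator_transpose[of "transpose A"] norm_normalized_residual
    by (simp add: T_map_transpose_T_map[OF nondegenerate])
qed

lemma aci_seq_Suc: "v (Suc k) = normalized_residual (transpose A) s (normalized_residual A s (v k))"
proof -
  have "\<not> has_monic_annihilator A s (v k)"
    using aci_seq_invariant by simp
  then show ?thesis
    by (simp add: T_map_transpose_T_map)
qed

definition \<mu> :: "nat \<Rightarrow> real" where
  "\<mu> k = norm (krylov_residual A s (v k))"

definition \<nu> :: "nat \<Rightarrow> real" where
  "\<nu> k = norm (krylov_residual (transpose A) s (normalized_residual A s (v k)))"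

lemma \<mu>_pos: "\<mu> k > 0"
  using aci_seq_invariant by (simp add: \<mu>_def krylov_residual_eq_0_iff)

lemma \<mu>_le_\<nu>: "\<mu> k \<le> \<nu> k"
  unfolding \<mu>_def \<nu>_def using aci_seq_invariant by (intro norm_krylov_residual_le_transpose) simp_all

lemma \<nu>_le_\<mu>_Suc: "\<nu> k \<le> \<mu> (Suc k)"
proof -
  have "\<not> has_monic_annihilator A s (v k)"
    using aci_seq_invariant by simp
  then have "norm (normalized_residual A s (v k)) = 1"
    and "\<not> has_monic_annihilator (transpose A) s (normalized_residual A s (v k))"
    by (simp_all add: norm_normalized_residual not_has_monic_annihilator_transpose)
  then show ?thesis
    unfolding \<mu>_def \<nu>_def aci_seq_Suc
    using norm_krylov_residual_le_transpose[of "transpose A"] by simp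
qed

lemma incseq_\<mu>: "incseq \<mu>"
  by (rule incseq_SucI) (rule order_trans[OF \<mu>_le_\<nu> \<nu>_le_\<mu>_Suc])

lemma convergent_\<mu>: "convergent \<mu>"
proof -
  obtain C where C: "\<And>x. norm (krylov_vec A s x) \<le> C * norm x"
    using linear_bounded[OF linear_krylov_vec] by blast
  have "\<mu> k \<le> C" for k
  proof -
    have "\<mu> k \<le> norm (\<Sum>j\<le>s. (if j = s then 1 else 0) *\<^sub>R krylov_vec A j (v k))"
      unfolding \<mu>_def by (rule norm_krylov_residual_le) simp
    also have "\<dots> = norm (krylov_vec A s (v k))"
      by (simp add: sum_atMost_split_last)
    also have "\<dots> \<le> C"
      using C[of "v k"] aci_seq_invariant by simp
    finally show ?thesis .
  qed
  then have "bdd_above (range \<mu>)"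
    by (intro bdd_aboveI2)
  then show ?thesis
    unfolding convergent_def using LIMSEQ_incseq_SUP[OF _ incseq_\<mu>] by blast
qed

lemma inner_aci_seq_Suc: "inner (v (Suc k)) (v k) = \<mu> k / \<nu> k"
  using inner_krylov_residual_transpose[of A s "v k"] aci_seq_invariant
  unfolding aci_seq_Suc
  by (simp add: normalized_residual_def \<mu>_def \<nu>_def divide_inverse mult.commute)

lemma dist_aci_seq_Suc_le: "(dist (v (Suc k)) (v k))\<^sup>2 \<le> 2 * (\<mu> (Suc k) - \<mu> k) / \<mu> 0"
proof -
  have unit: "inner (v j) (v j) = 1" for j
    using aci_seq_invariant[of j] by (simp add: norm_eq_sqrt_inner del: aci_seq.simps)
  have "(dist (v (Suc k)) (v k))\<^sup>2 = 2 - 2 * inner (v (Suc k)) (v k)"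
    by (simp add: dist_norm power2_norm_eq_inner inner_diff_left inner_diff_right inner_commute
        unit del: aci_seq.simps)
  also have "\<dots> = 2 * (\<nu> k - \<mu> k) / \<nu> k"
    unfolding inner_aci_seq_Suc using \<mu>_pos[of k] \<mu>_le_\<nu>[of k] by (simp add: field_simps)
  also have "\<dots> \<le> 2 * (\<nu> k - \<mu> k) / \<mu> 0"
    using \<mu>_pos[of 0] incseq_\<mu>[unfolded incseq_def, rule_format, of 0 k] \<mu>_le_\<nu>[of k]
    by (intro divide_left_mono) auto
  also have "\<dots> \<le> 2 * (\<mu> (Suc k) - \<mu> k) / \<mu> 0"
    using \<mu>_pos[of 0] \<nu>_le_\<mu>_Suc[of k] by (intro divide_right_mono) auto
  finally show ?thesis .
qed

lemma aci_seq_steps_vanish: "(\<lambda>k. dist (v (Suc k)) (v k)) \<longlonglongrightarrow> 0"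
proof -
  have "(\<lambda>k. \<mu> (Suc k) - \<mu> k) \<longlonglongrightarrow> 0"
    using convergent_\<mu> unfolding convergent_def
    by (metis LIMSEQ_Suc diff_self tendsto_diff)
  moreover have "\<mu> 0 \<noteq> 0"
    using \<mu>_pos[of 0] by simp
  ultimately have "(\<lambda>k. sqrt (2 * (\<mu> (Suc k) - \<mu> k) / \<mu> 0)) \<longlonglongrightarrow> sqrt (2 * 0 / \<mu> 0)"
    by (intro tendsto_intros)
  then have bound: "(\<lambda>k. sqrt (2 * (\<mu> (Suc k) - \<mu> k) / \<mu> 0)) \<longlonglongrightarrow> 0"
    by simp
  show ?thesis
  proof (rule tendsto_sandwich[OF _ _ tendsto_const bound])
    show "\<forall>\<^sub>F k in sequentially. 0 \<le> dist (v (Suc k)) (v k)"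
      by (rule always_eventually) simp
    show "\<forall>\<^sub>F k in sequentially. dist (v (Suc k)) (v k) \<le> sqrt (2 * (\<mu> (Suc k) - \<mu> k) / \<mu> 0)"
      using dist_aci_seq_Suc_le by (intro always_eventually allI real_le_rsqrt)
  qed
qed

lemma limit_vectors_subset_sphere: "limit_vectors v \<subseteq> sphere 0 1"
  by (rule limit_vectors_subset) (use aci_seq_invariant in auto)

lemma connected_aci_limit_vectors: "connected (limit_vectors v)"
  by (rule connected_limit_vectors[OF compact_sphere[of 0 1] _ aci_seq_steps_vanish])
    (use aci_seq_invariant in simp)

lemma limit_vectors_nondegenerate:
  assumes "y \<in> limit_vectors v"
  shows "\<not> has_monic_annihilator A s y"
proof
  assume "has_monic_annihilator A s y"
  then obtain c where "c s = 1" and annihilates: "(\<Sum>j\<le>s. c j *\<^sub>R krylov_vec A j y) = 0"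
    unfolding has_monic_annihilator_def by blast
  let ?g = "\<lambda>z. norm (\<Sum>j\<le>s. c j *\<^sub>R krylov_vec A j z)"
  have "\<mu> 0 \<le> ?g (v k)" for k
    using incseq_\<mu>[unfolded incseq_def, rule_format, of 0 k]
      norm_krylov_residual_le[of c s A "v k"] \<open>c s = 1\<close>
    unfolding \<mu>_def by linarith
  moreover have "continuous_on UNIV (\<lambda>z. krylov_vec A j z)" for j
    using linear_krylov_vec[of A j]
    by (simp add: linear_continuous_on linear_conv_bounded_linear)
  then have "closed {z. \<mu> 0 \<le> ?g z}"
    by (intro closed_Collect_le continuous_intros)
  ultimately have "\<mu> 0 \<le> ?g y"
    using limit_vectors_subset[of "{z. \<mu> 0 \<le> ?g z}" v] assms by blast
  then show False
    using annihilates \<mu>_pos[of 0] by simp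
qed

lemma limit_vectors_subset_Sigma_set: "limit_vectors v \<subseteq> Sigma_set s A"
proof
  fix y
  assume "y \<in> limit_vectors v"
  then show "y \<in> Sigma_set s A"
    using limit_vectors_subset_sphere limit_vectors_nondegenerate[of y] grade_ge_Suc_iff[of s A y]
    unfolding Sigma_set_def by auto
qed

lemma limit_vectors_fixed_point:
  assumes "y \<in> limit_vectors v"
  shows "y = T_map s (transpose A) (T_map s A y)"
proof -
  have nondegenerate: "\<not> has_monic_annihilator A s y"
    using limit_vectors_nondegenerate[OF assms] .
  have "isCont (\<lambda>z. normalized_residual (transpose A) s (normalized_residual A s z)) y"
    using isCont_normalized_residual[OF nondegenerate]
      isCont_normalized_residual[OF not_has_monic_annihilator_transpose[OF nondegenerate]]
    by (rule isCont_o2)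
  then have "normalized_residual (transpose A) s (normalized_residual A s y) = y"
    using aci_seq_Suc aci_seq_steps_vanish assms by (rule limit_vector_fixed_point)
  then show ?thesis
    by (simp add: T_map_transpose_T_map[OF nondegenerate])
qed

end

theorem theorem3p5:
  fixes A :: "real^'n^'n" and s :: nat and v0 :: "real^'n"
  assumes "1 \<le> s" and "s < min_poly_degree A"
    and "norm v0 = 1" and "grade A v0 \<ge> s + 1"
  shows "closed (limit_vectors (aci_seq s A v0))
       \<and> connected (limit_vectors (aci_seq s A v0))
       \<and> limit_vectors (aci_seq s A v0) \<subseteq> Sigma_set s A
       \<and> (\<forall>v\<in>limit_vectors (aci_seq s A v0).
             v = T_map s (transpose A) (T_map s A v))"
proof -
  interpret aci_run A s v0
    using assms(3,4) by unfold_locales (use grade_ge_Suc_iff[of s A v0] in auto)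
  show ?thesis
    using closed_limit_vectors connected_aci_limit_vectors limit_vectors_subset_Sigma_set
      limit_vectors_fixed_point by blast
qed

end
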